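(* Let $v$ be a real random variable with $\Pr[v\in[v^{\min},v^{\max}]]=1$, where $0\le v^{\min}<v^{\max}$, and let $c\ge 0$. There exists a cdf $G\in\mathcal{G}$ such that Mechanism 1 with $G$ is truthful, i.e. $U_{\text{coop}}(G)-U_{\text{heur}}(G)>c$, if and only if $$c<E\big[\max(0,\,v-E[v])\big].$$ Moreover, whenever this inequality holds, the cdf $G^*$ of the point mass at $E[v]$ (i.e. $G^*(r)=0$ for $r<E[v]$ and $G^*(r)=1$ for $r\ge E[v]$) makes Mechanism 1 truthful. Equivalently, $\sup_{G\in\mathcal{G}}\big(U_{\text{coop}}(G)-U_{\text{heur}}(G)\big)=E[\max(0,v-E[v])]$, and this supremum is attained by $G^*$.
   Context: Setting: A principal owns an object whose (common) monetary value $v$ is unknown; $v$ has a prior distribution supported in $[v^{\min},v^{\max}]$ with $0\le v^{\min}<v^{\max}$, and $E[\cdot]$ denotes expectation with respect to this prior. A single agent, risk-neutral with quasi-linear utility, values the object at $v$ as well; initially he knows only the prior, but he can learn $v$ exactly by incurring a cost $c\ge0$. Let $\mathcal{G}$ be the set of cumulative distribution functions of probability measures on $[v^{\min},v^{\max}]$; for $G\in\mathcal{G}$ write $dG$ for the associated measure and $\widehat G(x)=\int_{v^{\min}}^{x}G(r)\,dr$. Mechanism 1 (parameters $\epsilon>0$ and $G\in\mathcal{G}$): (1) the principal secretly draws $r$: with probability $\epsilon$ uniformly on $[v^{\min},v^{\max}]$, with probability $1-\epsilon$ according to $G$; (2) the agent bids a real number $b$; (3) $r$ is revealed; if $b\ge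 r$ the agent gets the object and pays $r$ (agent's utility $v-r$), otherwise nothing happens (utility $0$). In the limit $\epsilon\to0$, define the agent's optimal expected utility when he computes $v$ (cooperative strategy, excluding the cost $c$) as $U_{\text{coop}}(G)=E\big[\sup_{b}\int_{[v^{\min},b]}(v-r)\,dG(r)\big]$, and when he does not compute $v$ (heuristic strategy, bidding based on the prior only) as $U_{\text{heur}}(G)=\sup_{b}\int_{[v^{\min},b]}(E[v]-r)\,dG(r)$. Mechanism 1 with $G$ is called truthful if $U_{\text{coop}}(G)-U_{\text{heur}}(G)>c$. *)

theory Defs
  imports "HOL-Probability.Probability"
begin

text \<open>The set \<open>\<G>\<close> of (distributions given by) cdfs of probability measures on
  the interval [vmin, vmax]; a cdf is identified with its Borel probability measure dG.\<close>
definition reserve_dists :: "real \<Rightarrow> real \<Rightarrow> real measure set" where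
  "reserve_dists vmin vmax =
     {G. prob_space G \<and> sets G = sets borel \<and> emeasure G (UNIV - {vmin..vmax}) = 0}"

text \<open>Payoff of bidding b when the value is x and the reserve r is drawn from G:
  integral of (x - r) over r in [vmin, b] with respect to dG.\<close>
definition bid_payoff :: "real \<Rightarrow> real measure \<Rightarrow> real \<Rightarrow> real \<Rightarrow> real" where
  "bid_payoff vmin G x b = (LINT r:{vmin..b}|G. (x - r))"

definition U_coop :: "'a measure \<Rightarrow> ('a \<Rightarrow> real) \<Rightarrow> real \<Rightarrow> real measure \<Rightarrow> real" where
  "U_coop M v vmin G = (\<integral>\<omega>. (SUP b::real. bid_payoff vmin G (v \<omega>) b) \<partial>M)"

definition U_heur :: "'a measure \<Rightarrow> ('a \<Rightarrow> real) \<Rightarrow> real \<Rightarrow> real measure \<Rightarrow> real" where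
  "U_heur M v vmin G = (SUP b::real. bid_payoff vmin G (\<integral>\<omega>. v \<omega> \<partial>M) b)"

definition truthful :: "'a measure \<Rightarrow> ('a \<Rightarrow> real) \<Rightarrow> real \<Rightarrow> real \<Rightarrow> real measure \<Rightarrow> bool" where
  "truthful M v vmin c G \<longleftrightarrow> U_coop M v vmin G - U_heur M v vmin G > c"

end

theory Submission
  imports Defs
begin

text \<open>For every reserve distribution G, the optimal payoff \<open>\<phi>(x) = sup\<^sub>b \<integral>\<^bsub>[vmin,b]\<^esub> (x - r) dG(r)\<close>
  satisfies \<open>\<phi>(x) \<le> \<phi>(y) + max 0 (x - y)\<close>, since changing the value from y to x changes every
  bid's payoff by \<open>(x - y) G[vmin,b]\<close> with \<open>G[vmin,b] \<in> [0,1]\<close>. Taking \<open>y = E[v]\<close> and integrating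
  gives \<open>U_coop - U_heur \<le> E[max 0 (v - E[v])]\<close>. For the point mass at \<open>E[v]\<close> one has
  \<open>\<phi>(x) = max 0 (x - E[v])\<close> and \<open>\<phi>(E[v]) = 0\<close>, so the bound is attained.\<close>

definition best_payoff :: "real \<Rightarrow> real measure \<Rightarrow> real \<Rightarrow> real" where
  "best_payoff vmin G x = (SUP b. bid_payoff vmin G x b)"

lemma U_coop_eq: "U_coop M v vmin G = (\<integral>\<omega>. best_payoff vmin G (v \<omega>) \<partial>M)"
  by (simp add: U_coop_def best_payoff_def)

lemma U_heur_eq: "U_heur M v vmin G = best_payoff vmin G (\<integral>\<omega>. v \<omega> \<partial>M)"
  by (simp add: U_heur_def best_payoff_def)

lemma bid_payoff_eq_integral:
  "bid_payoff vmin G x b = (\<integral>r. indicator {vmin..b} r * (x - r) \<partial>G)"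
  by (simp add: bid_payoff_def set_lebesgue_integral_def)

lemma borel_measurable_bid_integrand:
  fixes vmin b x :: real
  assumes "sets G = sets borel"
  shows "(\<lambda>r. indicator {vmin..b} r * (x - r)) \<in> borel_measurable G"
  unfolding measurable_cong_sets[OF assms refl] by measurable

lemma integrable_bid_integrand:
  fixes vmin b x :: real
  assumes "prob_space G" "sets G = sets borel"
  shows "integrable G (\<lambda>r. indicator {vmin..b} r * (x - r))"
proof -
  interpret prob_space G by fact
  show ?thesis
  proof (rule integrable_const_bound[where B="\<bar>x\<bar> + \<bar>vmin\<bar> + \<bar>b\<bar>"])
    show "AE r in G. norm (indicator {vmin..b} r * (x - r)) \<le> \<bar>x\<bar> + \<bar>vmin\<bar> + \<bar>b\<bar>"
      by (auto simp: indicator_def)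
  qed (rule borel_measurable_bid_integrand[OF assms(2)])
qed

lemma bid_payoff_change_value:
  assumes "prob_space G" "sets G = sets borel"
  shows "bid_payoff vmin G x b = bid_payoff vmin G y b + (x - y) * measure G {vmin..b}"
proof -
  interpret prob_space G by fact
  have interval: "{vmin..b} \<in> sets G" using assms(2) by simp
  have "(\<integral>r. indicator {vmin..b} r * (x - r) \<partial>G)
      = (\<integral>r. indicator {vmin..b} r * (y - r) + (x - y) * indicator {vmin..b} r \<partial>G)"
    by (rule Bochner_Integration.integral_cong) (auto simp: algebra_simps)
  also have "\<dots> = (\<integral>r. indicator {vmin..b} r * (y - r) \<partial>G) + (x - y) * measure G {vmin..b}"
    using interval integrable_bid_integrand[OF assms]
    by (simp add: emeasure_finite less_top[symmetric])
  finally show ?thesis by (simp add: bid_payoff_eq_integral)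
qed

lemma bid_payoff_le:
  assumes "prob_space G" "sets G = sets borel"
  shows "bid_payoff vmin G x b \<le> max 0 (x - vmin)"
proof -
  interpret prob_space G by fact
  have "(\<integral>r. indicator {vmin..b} r * (x - r) \<partial>G) \<le> (\<integral>r. max 0 (x - vmin) \<partial>G)"
    by (rule integral_mono[OF integrable_bid_integrand[OF assms]]) (auto simp: indicator_def)
  then show ?thesis by (simp add: bid_payoff_eq_integral prob_space)
qed

lemma bid_payoff_below_min: "b < vmin \<Longrightarrow> bid_payoff vmin G x b = 0"
  by (simp add: bid_payoff_eq_integral)

lemma bdd_above_bid_payoff:
  assumes "prob_space G" "sets G = sets borel"
  shows "bdd_above (range (bid_payoff vmin G x))"
  using bid_payoff_le[OF assms] by (intro bdd_aboveI) auto

lemma bid_payoff_le_best_payoff: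
  assumes "prob_space G" "sets G = sets borel"
  shows "bid_payoff vmin G x b \<le> best_payoff vmin G x"
  unfolding best_payoff_def by (rule cSUP_upper[OF UNIV_I bdd_above_bid_payoff[OF assms]])

lemma best_payoff_nonneg:
  assumes "prob_space G" "sets G = sets borel"
  shows "0 \<le> best_payoff vmin G x"
  using bid_payoff_le_best_payoff[OF assms, of vmin x "vmin - 1"]
  by (simp add: bid_payoff_below_min)

lemma best_payoff_le_shift:
  assumes "prob_space G" "sets G = sets borel"
  shows "best_payoff vmin G x \<le> best_payoff vmin G y + max 0 (x - y)"
  unfolding best_payoff_def
proof (rule cSUP_least)
  fix b
  interpret prob_space G by fact
  have "0 \<le> measure G {vmin..b}" "measure G {vmin..b} \<le> 1" by auto
  then have "(x - y) * measure G {vmin..b} \<le> max 0 (x - y)"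
    by (cases "0 \<le> x - y") (auto intro: mult_left_le mult_nonpos_nonneg)
  then show "bid_payoff vmin G x b \<le> (SUP b. bid_payoff vmin G y b) + max 0 (x - y)"
    using bid_payoff_change_value[OF assms, of vmin x b y]
      bid_payoff_le_best_payoff[OF assms, of vmin y b]
    by (simp add: best_payoff_def)
qed simp

lemma best_payoff_lipschitz:
  assumes "prob_space G" "sets G = sets borel"
  shows "1-lipschitz_on UNIV (best_payoff vmin G)"
proof (rule lipschitz_onI)
  fix x y :: real
  show "dist (best_payoff vmin G x) (best_payoff vmin G y) \<le> 1 * dist x y"
    using best_payoff_le_shift[OF assms, of vmin x y] best_payoff_le_shift[OF assms, of vmin y x]
    by (auto simp: dist_real_def)
qed simp

lemma borel_measurable_best_payoff:
  assumes "prob_space G" "sets G = sets borel"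
  shows "best_payoff vmin G \<in> borel_measurable borel"
  by (rule borel_measurable_continuous_onI
      [OF lipschitz_on_continuous_on[OF best_payoff_lipschitz[OF assms]]])

lemma best_payoff_point_mass:
  assumes "vmin \<le> e"
  shows "best_payoff vmin (return borel e) x = max 0 (x - e)"
proof -
  have P: "prob_space (return borel e)" by (rule prob_space_return) simp
  have S: "sets (return borel e) = sets borel" by simp
  have payoff: "bid_payoff vmin (return borel e) x b = indicator {vmin..b} e * (x - e)" for b
    by (simp add: bid_payoff_eq_integral
        integral_return[OF _ borel_measurable_bid_integrand[OF refl]])
  show ?thesis
  proof (rule antisym)
    show "best_payoff vmin (return borel e) x \<le> max 0 (x - e)"
      unfolding best_payoff_def by (rule cSUP_least) (auto simp: payoff indicator_def)
    have "x - e \<le> best_payoff vmin (return borel e) x"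
      using bid_payoff_le_best_payoff[OF P S, of vmin x e] assms by (simp add: payoff)
    then show "max 0 (x - e) \<le> best_payoff vmin (return borel e) x"
      using best_payoff_nonneg[OF P S] by simp
  qed
qed

lemma (in prob_space) expectation_in_bounds:
  fixes v :: "'a \<Rightarrow> real"
  assumes "v \<in> borel_measurable M" "AE \<omega> in M. v \<omega> \<in> {a..b}"
  shows "expectation v \<in> {a..b}"
proof -
  have "integrable M v"
    by (rule integrable_const_bound[where B="\<bar>a\<bar> + \<bar>b\<bar>"]) (use assms in auto)
  then show ?thesis
    using assms(2) by (auto intro!: integral_ge_const integral_le_const elim: AE_mp)
qed

lemma return_in_reserve_dists:
  "e \<in> {vmin..vmax} \<Longrightarrow> return borel e \<in> reserve_dists vmin vmax"
  by (auto simp: reserve_dists_def intro!: prob_space_return)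

lemma truthfulness_gap_le:
  fixes M :: "'a measure" and v :: "'a \<Rightarrow> real"
  assumes "prob_space M" "v \<in> borel_measurable M"
    and "AE \<omega> in M. v \<omega> \<in> {vmin..vmax}"
    and "G \<in> reserve_dists vmin vmax"
  shows "U_coop M v vmin G - U_heur M v vmin G \<le> (\<integral>\<omega>. max 0 (v \<omega> - (\<integral>\<omega>. v \<omega> \<partial>M)) \<partial>M)"
proof -
  interpret prob_space M by fact
  have G: "prob_space G" "sets G = sets borel" using assms(4) by (auto simp: reserve_dists_def)
  define Ev where "Ev = expectation v"
  let ?\<phi> = "best_payoff vmin G"
  have shift: "?\<phi> x \<le> ?\<phi> Ev + max 0 (x - Ev)" for x
    by (rule best_payoff_le_shift[OF G])
  have integrable_excess: "integrable M (\<lambda>\<omega>. max 0 (v \<omega> - Ev))"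
    by (rule integrable_const_bound[where B="\<bar>vmax\<bar> + \<bar>Ev\<bar>"]) (use assms(2,3) in auto)
  have "integrable M (\<lambda>\<omega>. ?\<phi> (v \<omega>))"
  proof (rule integrable_const_bound[where B="?\<phi> Ev + \<bar>vmax\<bar> + \<bar>Ev\<bar>"])
    show "AE \<omega> in M. norm (?\<phi> (v \<omega>)) \<le> ?\<phi> Ev + \<bar>vmax\<bar> + \<bar>Ev\<bar>"
      using assms(3)
    proof eventually_elim
      case (elim \<omega>)
      then show ?case using shift[of "v \<omega>"] best_payoff_nonneg[OF G, of vmin "v \<omega>"] by auto
    qed
  qed (rule measurable_compose[OF assms(2) borel_measurable_best_payoff[OF G]])
  then have "(\<integral>\<omega>. ?\<phi> (v \<omega>) \<partial>M) \<le> (\<integral>\<omega>. ?\<phi> Ev + max 0 (v \<omega> - Ev) \<partial>M)"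
    by (rule integral_mono) (use integrable_excess shift in auto)
  also have "\<dots> = ?\<phi> Ev + (\<integral>\<omega>. max 0 (v \<omega> - Ev) \<partial>M)"
    using integrable_excess by (simp add: prob_space)
  finally show ?thesis by (simp add: U_coop_eq U_heur_eq Ev_def)
qed

lemma truthfulness_gap_point_mass:
  fixes M :: "'a measure" and v :: "'a \<Rightarrow> real"
  assumes "vmin \<le> (\<integral>\<omega>. v \<omega> \<partial>M)"
  shows "U_coop M v vmin (return borel (\<integral>\<omega>. v \<omega> \<partial>M)) - U_heur M v vmin (return borel (\<integral>\<omega>. v \<omega> \<partial>M))
       = (\<integral>\<omega>. max 0 (v \<omega> - (\<integral>\<omega>. v \<omega> \<partial>M)) \<partial>M)"
  using assms by (simp add: U_coop_eq U_heur_eq best_payoff_point_mass)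

theorem theorem1:
  fixes M :: "'a measure" and v :: "'a \<Rightarrow> real" and vmin vmax c :: real
  assumes "prob_space M"
    and "v \<in> borel_measurable M"
    and "AE \<omega> in M. v \<omega> \<in> {vmin..vmax}"
    and "0 \<le> vmin" and "vmin < vmax" and "0 \<le> c"
  defines "Ev \<equiv> (\<integral>\<omega>. v \<omega> \<partial>M)"
  defines "Gstar \<equiv> return borel Ev"
  shows "((\<exists>G\<in>reserve_dists vmin vmax. truthful M v vmin c G)
            \<longleftrightarrow> c < (\<integral>\<omega>. max 0 (v \<omega> - Ev) \<partial>M))
       \<and> (c < (\<integral>\<omega>. max 0 (v \<omega> - Ev) \<partial>M) \<longrightarrow> truthful M v vmin c Gstar)
       \<and> Gstar \<in> reserve_dists vmin vmax
       \<and> (SUP G\<in>reserve_dists vmin vmax. U_coop M v vmin G - U_heur M v vmin G)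
            = (\<integral>\<omega>. max 0 (v \<omega> - Ev) \<partial>M)
       \<and> U_coop M v vmin Gstar - U_heur M v vmin Gstar = (\<integral>\<omega>. max 0 (v \<omega> - Ev) \<partial>M)"
proof -
  let ?gap = "\<lambda>G. U_coop M v vmin G - U_heur M v vmin G"
  let ?E = "\<integral>\<omega>. max 0 (v \<omega> - Ev) \<partial>M"
  have Ev_bounds: "Ev \<in> {vmin..vmax}"
    unfolding Ev_def by (rule prob_space.expectation_in_bounds[OF assms(1-3)])
  have bound: "?gap G \<le> ?E" if "G \<in> reserve_dists vmin vmax" for G
    using truthfulness_gap_le[OF assms(1-3) that] by (simp add: Ev_def)
  have Gstar_in: "Gstar \<in> reserve_dists vmin vmax"
    unfolding Gstar_def by (rule return_in_reserve_dists[OF Ev_bounds])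
  have attained: "?gap Gstar = ?E"
    using Ev_bounds truthfulness_gap_point_mass[of vmin M v] by (simp add: Gstar_def Ev_def)
  have "(SUP G\<in>reserve_dists vmin vmax. ?gap G) = ?E"
    by (rule cSup_eq_maximum) (use Gstar_in attained bound in \<open>auto intro!: image_eqI[of _ _ Gstar]\<close>)
  moreover have "(\<exists>G\<in>reserve_dists vmin vmax. truthful M v vmin c G) \<longleftrightarrow> c < ?E"
  proof
    assume "\<exists>G\<in>reserve_dists vmin vmax. truthful M v vmin c G"
    then show "c < ?E" using bound unfolding truthful_def by (auto intro: less_le_trans)
  qed (use Gstar_in attained in \<open>auto simp: truthful_def intro!: bexI[of _ Gstar]\<close>)
  ultimately show ?thesis
    using Gstar_in attained unfolding truthful_def by simp
qed

end
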